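(* Let $\mathfrak{q}_0$ be the space form vector of the Euclidean plane (the vector representing the point $\infty$), and let $G=(g^{(1)},g^{(2)},\dots)$ be a planar circular net of $(M)$-type, consecutive curves forming Ribaucour pairs of $(\mathfrak{m}^{(j,j+1)})$-type. Then lifted-foldings of $G$ (canonically embedded in 3-space) produce circular nets whose curves lie in Euclidean planes if and only if $\langle\mathfrak{m}^{(j,j+1)},\mathfrak{q}_0\rangle=0$ for all $j$.
   Context: Planar light cone model: $\mathbb{R}^{3,2}$ with form of signature $(3,2)$ (coordinates with signs $+,+,+,-,-$), light cone $\mathcal{L}$; $\mathfrak{p}=(0,0,0,0,1)$; point $(x,y)\leftrightarrow(x,y,\frac12(1-x^2-y^2),\frac12(1+x^2+y^2),0)$, $\infty\leftrightarrow\mathfrak{q}_0=(0,0,1,-1,0)$; other elements of $\mathbb{P}(\mathcal{L})$ are oriented circles and lines (lines are those orthogonal to $\mathfrak{q}_0$); incidence = orthogonality. Inversion in $\mathfrak{a}$: $\sigma_a(x)=x-\frac{2\langle x,\mathfrak{a}\rangle}{\langle\mathfrak{a},\mathfrak{a}\rangle}\mathfrak{a}$. Ribaucour pair of curves: quadrilaterals $f_i,f_j,g_j,g_i$ concircular; R-evolution map: M-inversions in $\mathfrak{f}_i-\mathfrak{f}_j=\mathfrak{g}_i-\mathfrak{g}_j$ for suitable representatives; $(\mathfrak{m})$-type if $\mathrm{span}\{\mathfrak{m},\mathfrak{p}\}$ is 2-dimensional and fixed by all these inversions. A planar circular net of $(M)$-type is a sequence of planar curves with consecutive pairs of $(\mathfrak{m}^{(j,j+1)})$-type.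 Canonical embedding $\iota:\mathbb{R}^{3,2}\to\mathbb{R}^{4,2}$, $(x_1,\dots,x_5)\mapsto(x_1,x_2,0,x_3,x_4,x_5)$, places the net in the $xy$-plane of $\mathbb{R}^3$ (circles become spheres orthogonal to that plane). Lifted-folding of such a net: successively applying to the curves (composed) M-inversions in complexes $\mathfrak{n}=\mathfrak{m}^1+\tilde\lambda\mathfrak{m}^2+\langle\mathfrak{m}^1+\tilde\lambda\mathfrak{m}^2,\mathfrak{p}\rangle\mathfrak{p}$, $\tilde\lambda\in\mathbb{R}$, where $\mathfrak{m}^1$ represents the plane and $\mathfrak{m}^2=\iota(\mathfrak{m}^{(j,j+1)})$ (transported by previously applied inversions); the result is a circular net whose curves lie on spheres. *)

theory Defs
  imports "HOL-Analysis.Analysis"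
begin

text \<open>Vectors of R^(3,2) are elements of real^5 with components x$1,...,x$5;
  vectors of R^(4,2) are elements of real^6 with components x$1,...,x$6
  (in the numeral type 6 the index 6 coincides with 0).\<close>

definition lor32 :: "real^5 \<Rightarrow> real^5 \<Rightarrow> real" where
  "lor32 x y = x$1*y$1 + x$2*y$2 + x$3*y$3 - x$4*y$4 - x$5*y$5"

definition lor42 :: "real^6 \<Rightarrow> real^6 \<Rightarrow> real" where
  "lor42 x y = x$1*y$1 + x$2*y$2 + x$3*y$3 + x$4*y$4 - x$5*y$5 - x$6*y$6"

text \<open>The point sphere complex p and the space form vector q0 (the point at infinity).\<close>
definition pp :: "real^5" where "pp = vector [0,0,0,0,1]"
definition q0 :: "real^5" where "q0 = vector [0,0,1,-1,0]"

definition inv32 :: "real^5 \<Rightarrow> real^5 \<Rightarrow> real^5" where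
  "inv32 a x = x - (2 * lor32 x a / lor32 a a) *\<^sub>R a"

definition inv42 :: "real^6 \<Rightarrow> real^6 \<Rightarrow> real^6" where
  "inv42 a x = x - (2 * lor42 x a / lor42 a a) *\<^sub>R a"

text \<open>A (homogeneous representative of a) point of the Euclidean plane:
  a lightlike vector orthogonal to p, different from the point at infinity
  (i.e. not orthogonal to q0).\<close>
definition planar_point :: "real^5 \<Rightarrow> bool" where
  "planar_point x \<longleftrightarrow> lor32 x x = 0 \<and> lor32 x pp = 0 \<and> lor32 x q0 \<noteq> 0"

text \<open>An oriented circle or line: a lightlike vector not orthogonal to p.\<close>
definition circle32 :: "real^5 \<Rightarrow> bool" where
  "circle32 c \<longleftrightarrow> lor32 c c = 0 \<and> lor32 c pp \<noteq> 0"

definition concircular :: "real^5 \<Rightarrow> real^5 \<Rightarrow> real^5 \<Rightarrow> real^5 \<Rightarrow> bool" where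
  "concircular a b c d \<longleftrightarrow>
     (\<exists>s. circle32 s \<and> lor32 s a = 0 \<and> lor32 s b = 0 \<and> lor32 s c = 0 \<and> lor32 s d = 0)"

definition planar_curve :: "(int \<Rightarrow> real^5) \<Rightarrow> bool" where
  "planar_curve f \<longleftrightarrow> (\<forall>i. planar_point (f i))"

definition ribaucour_pair :: "(int \<Rightarrow> real^5) \<Rightarrow> (int \<Rightarrow> real^5) \<Rightarrow> bool" where
  "ribaucour_pair f g \<longleftrightarrow> (\<forall>i. concircular (f i) (f (i+1)) (g (i+1)) (g i))"

text \<open>Ribaucour pair of (m)-type: span{m,p} is 2-dimensional and, for every edge,
  the M-inversion of the R-evolution map (inversion in f_i - f_(i+1) = g_i - g_(i+1)
  for suitable representatives) fixes span{m,p}.\<close>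
definition ribaucour_pair_type :: "real^5 \<Rightarrow> (int \<Rightarrow> real^5) \<Rightarrow> (int \<Rightarrow> real^5) \<Rightarrow> bool" where
  "ribaucour_pair_type m f g \<longleftrightarrow>
     ribaucour_pair f g \<and> dim (span {m, pp}) = 2 \<and>
     (\<forall>i. \<exists>\<alpha> \<beta> \<gamma> \<delta> :: real. \<alpha> \<noteq> 0 \<and> \<beta> \<noteq> 0 \<and> \<gamma> \<noteq> 0 \<and> \<delta> \<noteq> 0 \<and>
        (let a = \<alpha> *\<^sub>R f i - \<beta> *\<^sub>R f (i+1) in
           a = \<gamma> *\<^sub>R g i - \<delta> *\<^sub>R g (i+1) \<and> lor32 a a \<noteq> 0 \<and>
           inv32 a ` span {m, pp} = span {m, pp}))"

definition planar_circular_net_M :: "(nat \<Rightarrow> int \<Rightarrow> real^5) \<Rightarrow> (nat \<Rightarrow> real^5) \<Rightarrow> bool" where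
  "planar_circular_net_M g m \<longleftrightarrow>
     (\<forall>j. planar_curve (g j)) \<and> (\<forall>j. ribaucour_pair_type (m j) (g j) (g (Suc j)))"

definition iota :: "real^5 \<Rightarrow> real^6" where
  "iota x = vector [x$1, x$2, 0, x$3, x$4, x$5]"

definition pp6 :: "real^6" where "pp6 = iota pp"
definition q06 :: "real^6" where "q06 = iota q0"

definition represents_xy_plane :: "real^6 \<Rightarrow> bool" where
  "represents_xy_plane m1 \<longleftrightarrow>
     (\<exists>c. c \<noteq> 0 \<and> (m1 = c *\<^sub>R vector [0,0,1,0,0,1] \<or> m1 = c *\<^sub>R vector [0,0,1,0,0,-1]))"

definition fold_complex :: "real^6 \<Rightarrow> real^6 \<Rightarrow> real \<Rightarrow> real^6" where
  "fold_complex a b l = (a + l *\<^sub>R b) + lor42 (a + l *\<^sub>R b) pp6 *\<^sub>R pp6"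

text \<open>Composed M-inversions of a lifted-folding with parameters lam j; at step j the plane
  and iota (m j) are transported by the previously applied inversions.\<close>
fun fold_map :: "real^6 \<Rightarrow> (nat \<Rightarrow> real^5) \<Rightarrow> (nat \<Rightarrow> real) \<Rightarrow> nat \<Rightarrow> real^6 \<Rightarrow> real^6" where
  "fold_map m1 m lam 0 = id"
| "fold_map m1 m lam (Suc j) =
     inv42 (fold_complex (fold_map m1 m lam j m1) (fold_map m1 m lam j (iota (m j))) (lam j))
     \<circ> fold_map m1 m lam j"

definition fold_vec :: "real^6 \<Rightarrow> (nat \<Rightarrow> real^5) \<Rightarrow> (nat \<Rightarrow> real) \<Rightarrow> nat \<Rightarrow> real^6" where
  "fold_vec m1 m lam j =
     fold_complex (fold_map m1 m lam j m1) (fold_map m1 m lam j (iota (m j))) (lam j)"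

text \<open>Parameters are admissible when all complexes are non-null (so the inversions exist).\<close>
definition admissible :: "real^6 \<Rightarrow> (nat \<Rightarrow> real^5) \<Rightarrow> (nat \<Rightarrow> real) \<Rightarrow> bool" where
  "admissible m1 m lam \<longleftrightarrow> (\<forall>j. lor42 (fold_vec m1 m lam j) (fold_vec m1 m lam j) \<noteq> 0)"

definition lifted_folding ::
  "(nat \<Rightarrow> int \<Rightarrow> real^5) \<Rightarrow> real^6 \<Rightarrow> (nat \<Rightarrow> real^5) \<Rightarrow> (nat \<Rightarrow> real) \<Rightarrow> nat \<Rightarrow> int \<Rightarrow> real^6" where
  "lifted_folding g m1 m lam j i = fold_map m1 m lam j (iota (g j i))"

definition folding_sphere :: "real^6 \<Rightarrow> (nat \<Rightarrow> real^5) \<Rightarrow> (nat \<Rightarrow> real) \<Rightarrow> nat \<Rightarrow> real^6" where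
  "folding_sphere m1 m lam j = fold_map m1 m lam j m1"

text \<open>A Euclidean plane of R^3 in the light cone model of R^(4,2): an (oriented) sphere
  vector orthogonal to the point at infinity.\<close>
definition euclidean_plane :: "real^6 \<Rightarrow> bool" where
  "euclidean_plane s \<longleftrightarrow> lor42 s s = 0 \<and> lor42 s pp6 \<noteq> 0 \<and> lor42 s q06 = 0"

definition curve_lies_in_plane :: "(int \<Rightarrow> real^6) \<Rightarrow> real^6 \<Rightarrow> bool" where
  "curve_lies_in_plane h s \<longleftrightarrow> euclidean_plane s \<and> (\<forall>i. lor42 (h i) s = 0)"

end

theory Submission
  imports Defs
begin

text \<open>Each step of a lifted-folding is the inversion in a complex orthogonal to p, so the
  composed map F is linear, fixes p, is an isometry of R^(4,2) for admissible parameters, and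
  the complex used at step j is F applied to the untransported complex
  n_j = m1 + lam_j iota(m_j) + <m1 + lam_j iota(m_j), p> p.
  Hence F m1 stays a sphere containing the folded curve, and it is a plane iff it is orthogonal
  to q0.  As <n_j, q0> = lam_j <m_j, q0>, every inversion fixes q0 when all <m_j, q0> vanish,
  and then <F m1, q0> = <m1, q0> = 0.  If <m_k, q0> \<noteq> 0, folding only at step k moves the
  sphere off q0, because <m1, n_k> = (m1$6)^2 \<noteq> 0.\<close>

lemma bilinear_lor42: "bilinear lor42"
  unfolding bilinear_def by (auto intro!: linearI simp: lor42_def algebra_simps)

interpretation lor42: bounded_bilinear lor42
  using bilinear_lor42 bilinear_conv_bounded_bilinear by blast

lemma lor42_commute: "lor42 x y = lor42 y x"
  by (simp add: lor42_def algebra_simps)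

lemma iota_nth:
  "iota x$1 = x$1" "iota x$2 = x$2" "iota x$3 = 0" "iota x$4 = x$3" "iota x$5 = x$4"
  "iota x$6 = x$5"
  by (simp_all add: iota_def vector_def)

lemma pp6_nth: "pp6$1 = 0" "pp6$2 = 0" "pp6$3 = 0" "pp6$4 = 0" "pp6$5 = 0" "pp6$6 = 1"
  by (simp_all add: pp6_def iota_nth pp_def vector_def)

lemma q06_nth: "q06$1 = 0" "q06$2 = 0" "q06$3 = 0" "q06$4 = 1" "q06$5 = -1" "q06$6 = 0"
  by (simp_all add: q06_def iota_nth q0_def vector_def)

lemma lor42_pp6: "lor42 x pp6 = - x$6"
  by (simp add: lor42_def pp6_nth)

lemma lor42_pp6_pp6: "lor42 pp6 pp6 = -1"
  by (simp add: lor42_pp6 pp6_nth)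

lemma lor42_q06: "lor42 x q06 = x$4 + x$5"
  by (simp add: lor42_def q06_nth)

lemma lor42_iota_iota: "lor42 (iota x) (iota y) = lor32 x y"
  by (simp add: lor42_def lor32_def iota_nth)

lemma lor42_iota_q06: "lor42 (iota x) q06 = lor32 x q0"
  by (simp add: q06_def lor42_iota_iota)

lemma lor32_pp: "lor32 x pp = - x$5"
  by (simp add: lor32_def pp_def vector_def)

lemma lor42_inv42_left:
  "lor42 (inv42 a x) y = lor42 x y - 2 * lor42 x a / lor42 a a * lor42 a y"
  unfolding inv42_def lor42.diff_left lor42.scaleR_left by simp

lemma lor42_inv42_inv42:
  assumes "lor42 a a \<noteq> 0"
  shows "lor42 (inv42 a x) (inv42 a y) = lor42 x y"
proof -
  have "lor42 a (inv42 a y) = - lor42 y a"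
    using assms by (subst lor42_commute) (simp add: lor42_inv42_left)
  moreover have "lor42 x (inv42 a y) = lor42 x y - 2 * lor42 y a / lor42 a a * lor42 x a"
    by (subst lor42_commute)
      (simp add: lor42_inv42_left lor42_commute[of y x] lor42_commute[of a x])
  ultimately show ?thesis
    unfolding lor42_inv42_left by (simp add: algebra_simps)
qed

lemma inv42_fixed: "lor42 x a = 0 \<Longrightarrow> inv42 a x = x"
  by (simp add: inv42_def)

lemma linear_inv42: "linear (inv42 a)"
  by (auto intro!: linearI simp: inv42_def lor42.add_left lor42.scaleR_left
      algebra_simps add_divide_distrib scaleR_add_left[symmetric] simp del: scaleR_add_left)

lemma lor42_fold_complex_pp6: "lor42 (fold_complex a b l) pp6 = 0"
  by (simp add: fold_complex_def lor42.add_left lor42.scaleR_left lor42_pp6_pp6)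

lemma fold_complex_linear_image:
  assumes "linear F" "F pp6 = pp6" "\<And>x. lor42 (F x) pp6 = lor42 x pp6"
  shows "F (fold_complex a b l) = fold_complex (F a) (F b) l"
proof -
  have image: "F (a + l *\<^sub>R b) = F a + l *\<^sub>R F b"
    using linear_add[OF assms(1)] linear_scale[OF assms(1)] by simp
  then have "lor42 (F a + l *\<^sub>R F b) pp6 = lor42 (a + l *\<^sub>R b) pp6"
    using assms(3) by metis
  then show ?thesis
    using image linear_add[OF assms(1)] linear_scale[OF assms(1)] assms(2)
    by (simp add: fold_complex_def)
qed

lemma lor42_fold_vec_pp6: "lor42 (fold_vec m1 m lam j) pp6 = 0"
  by (simp add: fold_vec_def lor42_fold_complex_pp6)

lemma fold_map_Suc_apply:
  "fold_map m1 m lam (Suc j) x = inv42 (fold_vec m1 m lam j) (fold_map m1 m lam j x)"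
  by (simp add: fold_vec_def)

declare fold_map.simps(2) [simp del]

lemma linear_fold_map: "linear (fold_map m1 m lam j)"
proof (induction j)
  case 0
  show ?case unfolding fold_map.simps by (rule linear_id)
next
  case (Suc j)
  show ?case unfolding fold_map.simps by (rule linear_compose[OF Suc.IH linear_inv42])
qed

lemma lor42_fold_map_pp6: "lor42 (fold_map m1 m lam j x) pp6 = lor42 x pp6"
proof (induction j)
  case (Suc j)
  then show ?case
    by (simp add: fold_map_Suc_apply lor42_inv42_left lor42_fold_vec_pp6)
qed simp

lemma fold_map_fixes_pp6: "fold_map m1 m lam j pp6 = pp6"
proof (induction j)
  case (Suc j)
  have "lor42 pp6 (fold_vec m1 m lam j) = 0"
    by (subst lor42_commute) (rule lor42_fold_vec_pp6)
  with Suc show ?case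
    by (simp add: fold_map_Suc_apply inv42_fixed)
qed simp

lemma fold_vec_eq:
  "fold_vec m1 m lam j = fold_map m1 m lam j (fold_complex m1 (iota (m j)) (lam j))"
  by (simp add: fold_vec_def fold_complex_linear_image linear_fold_map fold_map_fixes_pp6
      lor42_fold_map_pp6)

lemma fold_map_isometry:
  assumes "\<forall>i<j. lor42 (fold_vec m1 m lam i) (fold_vec m1 m lam i) \<noteq> 0"
  shows "lor42 (fold_map m1 m lam j x) (fold_map m1 m lam j y) = lor42 x y"
  using assms by (induction j) (simp_all add: fold_map_Suc_apply lor42_inv42_inv42)

lemma admissible_iff_seed_nonnull:
  "admissible m1 m lam \<longleftrightarrow>
     (\<forall>j. lor42 (fold_complex m1 (iota (m j)) (lam j))
              (fold_complex m1 (iota (m j)) (lam j)) \<noteq> 0)"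
    (is "_ \<longleftrightarrow> (\<forall>j. ?N j \<noteq> 0)")
proof -
  let ?V = "\<lambda>j. lor42 (fold_vec m1 m lam j) (fold_vec m1 m lam j)"
  have V_eq: "?V j = ?N j" if "\<forall>i<j. ?V i \<noteq> 0" for j
    using fold_map_isometry[OF that] by (simp add: fold_vec_eq)
  have "?V j \<noteq> 0" if "\<forall>j. ?N j \<noteq> 0" for j
  proof (induction j rule: less_induct)
    case (less j)
    then show ?case using V_eq that by simp
  qed
  then show ?thesis
    unfolding admissible_def using V_eq by auto
qed

lemma fold_map_fixes_q06:
  assumes "\<forall>i<j. lor42 (fold_vec m1 m lam i) (fold_vec m1 m lam i) \<noteq> 0"
    and "\<forall>i<j. lor42 (fold_complex m1 (iota (m i)) (lam i)) q06 = 0"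
  shows "fold_map m1 m lam j q06 = q06"
  using assms
proof (induction j)
  case (Suc j)
  then have nonnull: "\<forall>i<j. lor42 (fold_vec m1 m lam i) (fold_vec m1 m lam i) \<noteq> 0"
    and fixed: "fold_map m1 m lam j q06 = q06"
    by simp_all
  have "lor42 q06 (fold_vec m1 m lam j) = lor42 q06 (fold_complex m1 (iota (m j)) (lam j))"
    using fold_map_isometry[OF nonnull, of q06] fixed by (simp add: fold_vec_eq)
  also have "\<dots> = 0"
    using Suc.prems(2) lor42_commute by (metis lessI)
  finally show ?case
    using fixed by (simp add: fold_map_Suc_apply inv42_fixed)
qed simp

lemma represents_xy_plane_nth:
  assumes "represents_xy_plane m1"
  shows "m1$1 = 0" "m1$2 = 0" "m1$4 = 0" "m1$5 = 0" "m1$6 \<noteq> 0" "(m1$3)^2 = (m1$6)^2"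
proof -
  obtain c :: real and s :: real where "c \<noteq> 0" "s = 1 \<or> s = -1"
    and m1: "m1 = c *\<^sub>R vector [0, 0, 1, 0, 0, s]"
    using assms unfolding represents_xy_plane_def by force
  then show "m1$1 = 0" "m1$2 = 0" "m1$4 = 0" "m1$5 = 0" "m1$6 \<noteq> 0" "(m1$3)^2 = (m1$6)^2"
    by (auto simp: vector_def)
qed

lemma represents_xy_plane_lor42:
  assumes "represents_xy_plane m1"
  shows "m1$6 \<noteq> 0" "lor42 m1 m1 = 0" "lor42 m1 q06 = 0" "lor42 m1 (iota x) = - x$5 * m1$6"
  using represents_xy_plane_nth[OF assms]
  by (simp_all add: lor42_def q06_nth iota_nth power2_eq_square)

lemma seed_complex_lor42:
  fixes a :: "real^5" and l :: real
  assumes "represents_xy_plane m1"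
  defines "n \<equiv> fold_complex m1 (iota a) l"
  shows "lor42 n n = (m1$6)^2 + l^2 * (lor32 a a + (a$5)^2)"
    and "lor42 m1 n = (m1$6)^2"
    and "lor42 n q06 = l * lor32 a q0"
  using represents_xy_plane_lor42[OF assms(1)]
  by (simp_all add: n_def fold_complex_def lor42.add_left lor42.add_right lor42.diff_left
      lor42.diff_right lor42.scaleR_left lor42.scaleR_right lor42_commute[of "iota a" m1]
      lor42_commute[of pp6 m1] lor42_commute[of pp6 "iota a"] lor42_iota_iota lor42_pp6
      lor42_pp6_pp6 lor42_q06[of pp6] lor42_iota_q06 iota_nth pp6_nth q06_nth
      algebra_simps power2_eq_square)

lemma lifted_folding_in_plane_iff:
  assumes "planar_curve (g j)" "represents_xy_plane m1"
    and "\<forall>i<j. lor42 (fold_vec m1 m lam i) (fold_vec m1 m lam i) \<noteq> 0"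
  shows "curve_lies_in_plane (lifted_folding g m1 m lam j) (folding_sphere m1 m lam j)
    \<longleftrightarrow> lor42 (folding_sphere m1 m lam j) q06 = 0"
proof -
  note iso = fold_map_isometry[OF assms(3)]
  have "lor42 (folding_sphere m1 m lam j) pp6 \<noteq> 0"
    using lor42_fold_map_pp6[of m1 m lam j m1] represents_xy_plane_lor42(1)[OF assms(2)]
    by (simp add: folding_sphere_def lor42_pp6)
  moreover have "lor42 (folding_sphere m1 m lam j) (folding_sphere m1 m lam j) = 0"
    using iso represents_xy_plane_lor42(2)[OF assms(2)] by (simp add: folding_sphere_def)
  moreover have "lor42 (lifted_folding g m1 m lam j i) (folding_sphere m1 m lam j) = 0" for i
  proof -
    have "g j i $ 5 = 0"
      using assms(1) by (simp add: planar_curve_def planar_point_def lor32_pp)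
    then show ?thesis
      using iso represents_xy_plane_lor42(4)[OF assms(2)]
      by (simp add: lifted_folding_def folding_sphere_def lor42_commute[of "iota _" m1])
  qed
  ultimately show ?thesis
    by (simp add: curve_lies_in_plane_def euclidean_plane_def)
qed

lemma lor42_folding_sphere_q06_eq_0:
  assumes "represents_xy_plane m1" "admissible m1 m lam" "\<forall>j. lor32 (m j) q0 = 0"
  shows "lor42 (folding_sphere m1 m lam j) q06 = 0"
proof -
  have nonnull: "\<forall>i<j. lor42 (fold_vec m1 m lam i) (fold_vec m1 m lam i) \<noteq> 0"
    using assms(2) by (simp add: admissible_def)
  then have "fold_map m1 m lam j q06 = q06"
    using assms(3) by (intro fold_map_fixes_q06) (simp_all add: seed_complex_lor42[OF assms(1)])
  then show ?thesis
    using fold_map_isometry[OF nonnull, of m1 q06] represents_xy_plane_lor42(3)[OF assms(1)]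
    by (simp add: folding_sphere_def)
qed

lemma lor42_folding_sphere_Suc_q06:
  assumes m1: "represents_xy_plane m1"
    and nonnull: "\<forall>i<k. lor42 (fold_vec m1 m lam i) (fold_vec m1 m lam i) \<noteq> 0"
    and fixed: "fold_map m1 m lam k q06 = q06"
  shows "lor42 (folding_sphere m1 m lam (Suc k)) q06 =
    - 2 * (m1$6)^2 / lor42 (fold_vec m1 m lam k) (fold_vec m1 m lam k) * lam k * lor32 (m k) q0"
proof -
  note iso = fold_map_isometry[OF nonnull]
  define n where "n = fold_complex m1 (iota (m k)) (lam k)"
  have vec: "fold_vec m1 m lam k = fold_map m1 m lam k n"
    by (simp add: n_def fold_vec_eq)
  have "lor42 (fold_map m1 m lam k m1) q06 = 0"
    using iso[of m1 q06] fixed represents_xy_plane_lor42(3)[OF m1] by simp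
  moreover have "lor42 (fold_map m1 m lam k m1) (fold_vec m1 m lam k) = (m1$6)^2"
    using iso[of m1 n] seed_complex_lor42(2)[OF m1] by (simp add: vec n_def)
  moreover have "lor42 (fold_vec m1 m lam k) q06 = lam k * lor32 (m k) q0"
    using iso[of n q06] fixed seed_complex_lor42(3)[OF m1] by (simp add: vec n_def)
  ultimately show ?thesis
    by (simp add: folding_sphere_def fold_map_Suc_apply lor42_inv42_left)
qed

lemma exists_nonzero_square_coeff:
  fixes c A :: real
  assumes "c \<noteq> 0"
  obtains l where "l \<noteq> 0" "c + l^2 * A \<noteq> 0"
proof (cases "c + A = 0")
  case True
  then have "c + 2^2 * A \<noteq> 0" using assms by simp
  then show ?thesis using that[of 2] by simp
next
  case False
  then show ?thesis using that[of 1] by simp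
qed

lemma exists_admissible_folding_off_planes:
  assumes m1: "represents_xy_plane m1" and "lor32 (m k) q0 \<noteq> 0"
  obtains lam where "admissible m1 m lam" "lor42 (folding_sphere m1 m lam (Suc k)) q06 \<noteq> 0"
proof -
  have "(m1$6)^2 \<noteq> 0"
    using represents_xy_plane_lor42(1)[OF m1] by simp
  then obtain l where l: "l \<noteq> 0" "(m1$6)^2 + l^2 * (lor32 (m k) (m k) + (m k $ 5)^2) \<noteq> 0"
    by (rule exists_nonzero_square_coeff)
  define lam where "lam = (\<lambda>j. if j = k then l else 0)"
  have adm: "admissible m1 m lam"
    using l represents_xy_plane_lor42(1)[OF m1]
    by (auto simp: admissible_iff_seed_nonnull seed_complex_lor42[OF m1] lam_def)
  then have nonnull: "\<forall>i. lor42 (fold_vec m1 m lam i) (fold_vec m1 m lam i) \<noteq> 0"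
    by (simp add: admissible_def)
  have "fold_map m1 m lam k q06 = q06"
    using nonnull by (intro fold_map_fixes_q06) (simp_all add: seed_complex_lor42[OF m1] lam_def)
  then have "lor42 (folding_sphere m1 m lam (Suc k)) q06 =
    - 2 * (m1$6)^2 / lor42 (fold_vec m1 m lam k) (fold_vec m1 m lam k) * l * lor32 (m k) q0"
    using nonnull by (simp add: lor42_folding_sphere_Suc_q06[OF m1] lam_def)
  also have "\<dots> \<noteq> 0"
    using nonnull l assms(2) represents_xy_plane_lor42(1)[OF m1] by simp
  finally have "lor42 (folding_sphere m1 m lam (Suc k)) q06 \<noteq> 0" .
  with adm show ?thesis by (rule that)
qed

theorem corollary2p11:
  fixes g :: "nat \<Rightarrow> int \<Rightarrow> real^5" and m :: "nat \<Rightarrow> real^5" and m1 :: "real^6"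
  assumes "planar_circular_net_M g m"
    and "represents_xy_plane m1"
  shows "(\<forall>lam. admissible m1 m lam \<longrightarrow>
            (\<forall>j. curve_lies_in_plane (lifted_folding g m1 m lam j) (folding_sphere m1 m lam j)))
         \<longleftrightarrow> (\<forall>j. lor32 (m j) q0 = 0)"
proof -
  have in_plane_iff:
    "curve_lies_in_plane (lifted_folding g m1 m lam j) (folding_sphere m1 m lam j)
      \<longleftrightarrow> lor42 (folding_sphere m1 m lam j) q06 = 0" if "admissible m1 m lam" for lam j
    using assms that
    by (intro lifted_folding_in_plane_iff) (simp_all add: planar_circular_net_M_def admissible_def)
  show ?thesis
  proof
    assume folds_planar: "\<forall>lam. admissible m1 m lam \<longrightarrow>
      (\<forall>j. curve_lies_in_plane (lifted_folding g m1 m lam j) (folding_sphere m1 m lam j))"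
    show "\<forall>j. lor32 (m j) q0 = 0"
    proof (rule ccontr)
      assume "\<not> (\<forall>j. lor32 (m j) q0 = 0)"
      then obtain k where "lor32 (m k) q0 \<noteq> 0" by blast
      with assms(2) obtain lam where "admissible m1 m lam"
        "lor42 (folding_sphere m1 m lam (Suc k)) q06 \<noteq> 0"
        by (rule exists_admissible_folding_off_planes)
      with folds_planar in_plane_iff show False by blast
    qed
  next
    assume "\<forall>j. lor32 (m j) q0 = 0"
    then show "\<forall>lam. admissible m1 m lam \<longrightarrow>
      (\<forall>j. curve_lies_in_plane (lifted_folding g m1 m lam j) (folding_sphere m1 m lam j))"
      using in_plane_iff lor42_folding_sphere_q06_eq_0[OF assms(2)] by blast
  qed
qed

end
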